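(* Let $\mu>0$, $x>0$, $y>0$, and let $n,q\ge 0$ be integers. Then $$\sum_{k=0}^{n}F_{\mu+k}(x,y)<P_{\mu}(x,y),$$ and, provided $F_{\mu+n+1}(x,y)>F_{\mu+n+q+2}(x,y)$, $$P_\mu(x,y)<\sum_{k=0}^{n}F_{\mu+k}(x,y)+U^{(q)}_{\mu+n+1}(x,y),$$ where $U_{\nu}^{(q)}(x,y)=\dfrac{\sum_{k=0}^q F_{\nu+k}(x,y)}{F_\nu(x,y)-F_{\nu+q+1}(x,y)}F_{\nu}(x,y)$.
   Context: $P_{\mu}(x,y)=x^{\frac12(1-\mu)}\int_0^{y} t^{\frac12(\mu-1)}e^{-t-x}I_{\mu-1}(2\sqrt{xt})\,dt$ for $\mu>0$, with $I_\nu$ the modified Bessel function of the first kind; $F_{\mu}(x,y)=(y/x)^{\mu/2}e^{-x-y}I_{\mu}(2\sqrt{xy})$. *)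

theory Defs
  imports "HOL-Analysis.Analysis"
begin

definition besselI :: "real \<Rightarrow> real \<Rightarrow> real" where
  "besselI \<nu> z = (\<Sum>m. (z / 2) powr (2 * real m + \<nu>) / (fact m * Gamma (real m + \<nu> + 1)))"

definition marcumP :: "real \<Rightarrow> real \<Rightarrow> real \<Rightarrow> real" where
  "marcumP \<mu> x y = x powr ((1 - \<mu>) / 2) *
     integral {0..y} (\<lambda>t. t powr ((\<mu> - 1) / 2) * exp (- t - x) * besselI (\<mu> - 1) (2 * sqrt (x * t)))"

definition marcumF :: "real \<Rightarrow> real \<Rightarrow> real \<Rightarrow> real" where
  "marcumF \<mu> x y = (y / x) powr (\<mu> / 2) * exp (- x - y) * besselI \<mu> (2 * sqrt (x * y))"

definition marcumU :: "real \<Rightarrow> nat \<Rightarrow> real \<Rightarrow> real \<Rightarrow> real" where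
  "marcumU \<nu> q x y = (\<Sum>k\<le>q. marcumF (\<nu> + real k) x y)
      / (marcumF \<nu> x y - marcumF (\<nu> + real q + 1) x y) * marcumF \<nu> x y"

end

theory Submission
  imports Defs "HOL-Computational_Algebra.Formal_Power_Series"
begin

text \<open>
  Write \<open>I\<^sub>s(2\<surd>w) = w\<^bsup>s/2\<^esup> \<phi>\<^sub>s(w)\<close> with the entire series \<open>\<phi>\<^sub>s\<close>. Then \<open>F\<^sub>s(x,y)\<close> is the
  Poisson mixture \<open>\<Sum>\<^sub>m e\<^sup>-\<^sup>x x\<^sup>m/m! \<cdot> g\<^sub>m\<^sub>+\<^sub>s(y)\<close> of the gamma densities \<open>g\<^sub>a(t) = e\<^sup>-\<^sup>t t\<^sup>a/\<Gamma>(a+1)\<close>, and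
  \<open>P\<^sub>\<mu>(x,y)\<close> is the same mixture of the distribution functions \<open>\<integral>\<^sub>0\<^sup>y g\<^sub>m\<^sub>+\<^sub>\<mu>\<^sub>-\<^sub>1\<close>. Since
  \<open>g\<^sub>a' = g\<^sub>a\<^sub>-\<^sub>1 - g\<^sub>a\<close>, each distribution function equals \<open>\<Sum>\<^sub>k g\<^sub>a\<^sub>+\<^sub>k(y)\<close>; exchanging the
  two summations gives \<open>P\<^sub>\<mu> = \<Sum>\<^sub>k F\<^sub>\<mu>\<^sub>+\<^sub>k\<close>, a series of positive terms, whence the lower bound.

  The Cauchy product coefficients of \<open>\<phi>\<^sub>s \<phi>\<^sub>s\<^sub>+\<^sub>2\<close> and \<open>\<phi>\<^sub>s\<^sub>+\<^sub>1\<^sup>2\<close> are Vandermonde convolutions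
  and compare termwise, which gives the Tur\'an inequality \<open>F\<^sub>s F\<^sub>s\<^sub>+\<^sub>2 < F\<^sub>s\<^sub>+\<^sub>1\<^sup>2\<close>. So
  \<open>G\<^sub>k = F\<^sub>\<nu>\<^sub>+\<^sub>k\<close> is strictly log-concave, hence \<open>G\<^sub>j\<^sub>+\<^sub>d G\<^sub>0 < G\<^sub>d G\<^sub>j\<close> for \<open>j, d \<ge> 1\<close>; summing
  over \<open>j\<close> with \<open>d = q + 1\<close> bounds the tail \<open>\<Sum>\<^sub>j G\<^sub>j\<close> by \<open>U\<^sub>\<nu>\<^sup>(\<^sup>q\<^sup>)\<close>.
\<close>

section \<open>Strictly log-concave sequences\<close>

lemma log_concave_cross_less:
  fixes u :: "nat \<Rightarrow> real"
  assumes pos: "\<And>n. u n > 0" and turan: "\<And>n. u n * u (n + 2) < (u (n + 1))\<^sup>2"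
    and d: "d \<ge> 1" and k: "k \<ge> 1"
  shows "u (d + k) * u 0 < u d * u k"
proof -
  define r where "r n = u (Suc n) / u n" for n
  have r_pos: "r n > 0" for n
    using pos by (simp add: r_def)
  have r_Suc_less: "- r n < - r (Suc n)" for n
    using turan[of n] pos[of n] pos[of "Suc n"]
    by (simp add: r_def power2_eq_square divide_simps mult.commute)
  have u_shift: "u (n + m) = u n * (\<Prod>i<m. r (n + i))" for n m
  proof (induction m)
    case (Suc m)
    have "u (n + Suc m) = u (n + m) * r (n + m)"
      using pos[of "n + m"] by (simp add: r_def)
    then show ?case
      using Suc by simp
  qed simp
  have "(\<Prod>i<k. r (d + i)) < (\<Prod>i<k. r i)"
  proof (rule prod_mono_strict[where i = 0])
    have less: "r (d + i) < r i" for i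
      using lift_Suc_mono_less[of "\<lambda>n. - r n", OF r_Suc_less, of i "d + i"] d by simp
    then show "r (d + 0) < r 0"
      by (metis add_0_right)
    show "\<And>i. i \<in> {..<k} \<Longrightarrow> 0 \<le> r (d + i) \<and> r (d + i) \<le> r i"
      using r_pos less less_imp_le by auto
  qed (use k r_pos in auto)
  then have "u d * (\<Prod>i<k. r (d + i)) * u 0 < u d * (u 0 * (\<Prod>i<k. r i))"
    using pos[of d] pos[of 0] by (simp add: ac_simps)
  then show ?thesis
    using u_shift[of d k] u_shift[of 0 k] by simp
qed

lemma suminf_log_concave_less:
  fixes G :: "nat \<Rightarrow> real"
  assumes summable: "summable G" and pos: "\<And>n. G n > 0"
    and turan: "\<And>n. G n * G (n + 2) < (G (n + 1))\<^sup>2"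
    and gap: "G (Suc q) < G 0"
  shows "suminf G < (\<Sum>k\<le>q. G k) / (G 0 - G (Suc q)) * G 0"
proof -
  define d where "d = Suc q"
  define S where "S = (\<Sum>k\<le>q. G k)"
  define T where "T = (\<Sum>j. G (j + d))"
  have summable_tail: "summable (\<lambda>j. G (j + d))"
    using summable by (rule summable_ignore_initial_segment)
  have split: "suminf G = T + S"
    unfolding T_def S_def d_def lessThan_Suc_atMost[symmetric]
    by (rule suminf_split_initial_segment[OF summable])
  define D where "D j = G d * G j - G (j + d) * G 0" for j
  have cross: "G (j + d) * G 0 < G d * G j" if "j \<ge> 1" for j
    using log_concave_cross_less[OF pos turan, of d j] that by (simp add: d_def add.commute)
  have D_nonneg: "D j \<ge> 0" for j
    using cross[of j] by (cases "j = 0") (simp_all add: D_def)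
  have summable_D: "summable D"
    unfolding D_def by (intro summable_diff summable_mult summable_mult2 summable summable_tail)
  have "0 < D 1"
    using cross[of 1] by (simp add: D_def)
  then have "0 < suminf D"
    using suminf_pos_iff[OF summable_D D_nonneg] by blast
  also have "suminf D = G d * suminf G - T * G 0"
    unfolding D_def T_def
    by (simp add: suminf_diff[symmetric] summable_mult summable_mult2 summable summable_tail
        suminf_mult suminf_mult2)
  finally have "suminf G * (G 0 - G d) < S * G 0"
    unfolding split by (simp add: algebra_simps)
  then show ?thesis
    using gap by (simp add: S_def d_def pos_less_divide_eq)
qed

lemma log_concave_suminf_bounds:
  fixes F :: "nat \<Rightarrow> real"
  assumes summable: "summable F" and pos: "\<And>n. F n > 0"
    and turan: "\<And>n. F n * F (n + 2) < (F (n + 1))\<^sup>2"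
  shows "(\<Sum>k\<le>n. F k) < suminf F"
    and "F (n + q + 2) < F (n + 1) \<Longrightarrow>
      suminf F < (\<Sum>k\<le>n. F k) + (\<Sum>k\<le>q. F (n + 1 + k)) / (F (n + 1) - F (n + q + 2)) * F (n + 1)"
proof -
  define G where "G j = F (n + 1 + j)" for j
  have G_eq: "(\<lambda>j. F (j + Suc n)) = G"
    by (simp add: G_def fun_eq_iff add_ac)
  have summable_G: "summable G"
    using summable_ignore_initial_segment[OF summable, of "Suc n"] by (simp only: G_eq)
  have split: "suminf F = suminf G + (\<Sum>k\<le>n. F k)"
    using suminf_split_initial_segment[OF summable, of "Suc n"] unfolding G_eq lessThan_Suc_atMost by simp
  have "0 < suminf G"
    using pos by (intro suminf_pos summable_G) (simp add: G_def)
  then show "(\<Sum>k\<le>n. F k) < suminf F"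
    unfolding split by simp
  assume gap: "F (n + q + 2) < F (n + 1)"
  have "suminf G < (\<Sum>k\<le>q. G k) / (G 0 - G (Suc q)) * G 0"
  proof (rule suminf_log_concave_less[OF summable_G])
    show "G k * G (k + 2) < (G (k + 1))\<^sup>2" for k
      using turan[of "n + 1 + k"] by (simp add: G_def add_ac)
  qed (use pos gap in \<open>simp_all add: G_def add_ac\<close>)
  then show "suminf F < (\<Sum>k\<le>n. F k) + (\<Sum>k\<le>q. F (n + 1 + k)) / (F (n + 1) - F (n + q + 2)) * F (n + 1)"
    unfolding split by (simp add: G_def add_ac)
qed

section \<open>The entire part of the Bessel function\<close>

definition bessel_term :: "real \<Rightarrow> real \<Rightarrow> nat \<Rightarrow> real" where
  "bessel_term s w m = w ^ m / (fact m * Gamma (real m + s + 1))"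

definition bessel_sum :: "real \<Rightarrow> real \<Rightarrow> real" where
  "bessel_sum s w = (\<Sum>m. bessel_term s w m)"

lemma pos_not_nonpos_Ints: "(z::real) > 0 \<Longrightarrow> z \<notin> \<int>\<^sub>\<le>\<^sub>0"
  by (auto dest: nonpos_Ints_nonpos)

lemma Gamma_times_fact_le:
  fixes a :: real
  assumes "a \<ge> 1"
  shows "Gamma a * fact k \<le> Gamma (a + real k)"
proof (induction k)
  case (Suc k)
  have "a + real k \<notin> \<int>\<^sub>\<le>\<^sub>0"
    using assms by (intro pos_not_nonpos_Ints) simp
  then have Gamma_Suc: "Gamma (a + real (Suc k)) = (a + real k) * Gamma (a + real k)"
    using Gamma_plus1[of "a + real k"] by (simp add: add_ac)
  have "Gamma a * fact (Suc k) = (real k + 1) * (Gamma a * fact k)"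
    by simp
  also have "\<dots> \<le> (a + real k) * Gamma (a + real k)"
    using assms Suc by (intro mult_mono) (auto intro!: mult_nonneg_nonneg less_imp_le[OF Gamma_real_pos])
  finally show ?case
    using Gamma_Suc by simp
qed simp

lemma bessel_term_nonneg: "s > -1 \<Longrightarrow> w \<ge> 0 \<Longrightarrow> bessel_term s w m \<ge> 0"
  unfolding bessel_term_def by (auto intro!: divide_nonneg_pos)

lemma bessel_term_pos: "s > -1 \<Longrightarrow> w > 0 \<Longrightarrow> bessel_term s w m > 0"
  unfolding bessel_term_def by (auto intro!: divide_pos_pos)

lemma summable_bessel_term:
  assumes s: "s > -1" and w: "w \<ge> 0"
  shows "summable (bessel_term s w)"
proof (rule summable_comparison_test'[where N = 0])
  define C where "C = 1 / Gamma (s + 1) + 1 / Gamma (s + 2)"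
  have Gamma_pos: "Gamma (s + 1) > 0" "Gamma (s + 2) > 0"
    using s by auto
  show "summable (\<lambda>m. C * (inverse (fact m) * w ^ m))"
    by (intro summable_mult summable_exp)
  show "norm (bessel_term s w m) \<le> C * (inverse (fact m) * w ^ m)" for m
  proof (cases m)
    case 0
    then show ?thesis
      using Gamma_pos by (simp add: bessel_term_def C_def)
  next
    case (Suc j)
    have "Gamma (s + 2) * 1 \<le> Gamma (s + 2) * fact j"
      using Gamma_pos by (intro mult_left_mono) auto
    also have "\<dots> \<le> Gamma (s + 2 + real j)"
      by (rule Gamma_times_fact_le) (use s in auto)
    finally have Gamma_le: "Gamma (s + 2) \<le> Gamma (real m + s + 1)"
      using Suc by (simp add: add_ac)
    have "norm (bessel_term s w m) = w ^ m / (fact m * Gamma (real m + s + 1))"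
      using bessel_term_nonneg[OF s w, of m] by (simp only: real_norm_def abs_of_nonneg bessel_term_def)
    also have "\<dots> \<le> w ^ m / (fact m * Gamma (s + 2))"
      using Gamma_le Gamma_pos w by (intro divide_left_mono) (auto intro!: mult_left_mono mult_pos_pos)
    also have "\<dots> \<le> C * (inverse (fact m) * w ^ m)"
      using Gamma_pos w by (simp add: C_def field_simps)
    finally show ?thesis .
  qed
qed

lemma bessel_sum_pos: "s > -1 \<Longrightarrow> w > 0 \<Longrightarrow> bessel_sum s w > 0"
  unfolding bessel_sum_def by (rule suminf_pos) (auto intro: summable_bessel_term bessel_term_pos)

lemma besselI_eq_bessel_sum:
  assumes w: "w > 0" and s: "s > -1"
  shows "besselI s (2 * sqrt w) = sqrt w powr s * bessel_sum s w"
proof -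
  have "(2 * sqrt w / 2) powr (2 * real m + s) / (fact m * Gamma (real m + s + 1))
      = sqrt w powr s * bessel_term s w m" for m
  proof -
    have "sqrt w powr (2 * real m + s) = sqrt w powr s * sqrt w powr real (2 * m)"
      by (simp add: powr_add add_ac)
    also have "sqrt w powr real (2 * m) = sqrt w ^ (2 * m)"
      by (rule powr_realpow) (use w in simp)
    also have "sqrt w ^ (2 * m) = w ^ m"
      using w by (simp add: power_mult)
    finally show ?thesis
      unfolding bessel_term_def by simp
  qed
  then have "besselI s (2 * sqrt w) = (\<Sum>m. sqrt w powr s * bessel_term s w m)"
    unfolding besselI_def by simp
  also have "\<dots> = sqrt w powr s * bessel_sum s w"
    unfolding bessel_sum_def by (rule suminf_mult[OF summable_bessel_term]) (use s w in auto)
  finally show ?thesis .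
qed

definition bessel_product_coeff :: "real \<Rightarrow> real \<Rightarrow> nat \<Rightarrow> real" where
  "bessel_product_coeff a b N = (\<Sum>i\<le>N.
     1 / (fact i * fact (N - i) * Gamma (real i + a + 1) * Gamma (real (N - i) + b + 1)))"

lemma bessel_sum_product_sums:
  assumes a: "a > -1" and b: "b > -1" and w: "w \<ge> 0"
  shows "(\<lambda>N. w ^ N * bessel_product_coeff a b N) sums (bessel_sum a w * bessel_sum b w)"
proof -
  have "summable (\<lambda>m. norm (bessel_term s w m))" if "s > -1" for s
    using summable_bessel_term[OF that w] bessel_term_nonneg[OF that w] by simp
  then have "(\<lambda>N. \<Sum>i\<le>N. bessel_term a w i * bessel_term b w (N - i)) sums (bessel_sum a w * bessel_sum b w)"
    unfolding bessel_sum_def using a b by (intro Cauchy_product_sums)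
  moreover have "(\<Sum>i\<le>N. bessel_term a w i * bessel_term b w (N - i)) = w ^ N * bessel_product_coeff a b N" for N
    unfolding bessel_product_coeff_def sum_distrib_left
  proof (intro sum.cong refl)
    fix i
    assume "i \<in> {..N}"
    then have "w ^ i * w ^ (N - i) = w ^ N"
      by (simp flip: power_add)
    then show "bessel_term a w i * bessel_term b w (N - i) = w ^ N * (1 / (fact i * fact (N - i)
        * Gamma (real i + a + 1) * Gamma (real (N - i) + b + 1)))"
      unfolding bessel_term_def by (simp add: field_simps)
  qed
  ultimately show ?thesis
    by simp
qed

lemma bessel_product_coeff_eq:
  assumes a: "a > -1" and b: "b > -1"
  shows "bessel_product_coeff a b N
    = ((a + b + 2 * real N) gchoose N) / (Gamma (a + real N + 1) * Gamma (b + real N + 1))"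
proof -
  have Gamma_pos: "Gamma (a + real N + 1) > 0" "Gamma (b + real N + 1) > 0"
    using a b by auto
  have term_eq: "1 / (fact i * fact (N - i) * Gamma (real i + a + 1) * Gamma (real (N - i) + b + 1))
     = ((b + real N) gchoose i) * ((a + real N) gchoose (N - i))
       / (Gamma (a + real N + 1) * Gamma (b + real N + 1))"
    if i: "i \<le> N" for i
  proof -
    have binom_b: "(b + real N) gchoose i
        = Gamma (b + real N + 1) / (fact i * Gamma (b + real N - real i + 1))"
      by (rule gbinomial_Gamma) (rule pos_not_nonpos_Ints, use b in auto)
    have binom_a: "(a + real N) gchoose (N - i)
        = Gamma (a + real N + 1) / (fact (N - i) * Gamma (a + real N - real (N - i) + 1))"
      by (rule gbinomial_Gamma) (rule pos_not_nonpos_Ints, use a in auto)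
    have shift_a: "a + real N - real (N - i) + 1 = real i + a + 1"
      and shift_b: "b + real N - real i + 1 = real (N - i) + b + 1"
      using i by (simp_all add: of_nat_diff)
    have "Gamma (real i + a + 1) > 0" "Gamma (real (N - i) + b + 1) > 0"
      using a b by auto
    then show ?thesis
      unfolding binom_a binom_b shift_a shift_b using Gamma_pos by (simp add: field_simps)
  qed
  have "bessel_product_coeff a b N = (\<Sum>i=0..N. ((b + real N) gchoose i) * ((a + real N) gchoose (N - i)))
      / (Gamma (a + real N + 1) * Gamma (b + real N + 1))"
    unfolding bessel_product_coeff_def sum_divide_distrib atLeast0AtMost
    by (intro sum.cong refl term_eq) simp
  also have "(\<Sum>i=0..N. ((b + real N) gchoose i) * ((a + real N) gchoose (N - i)))
      = (a + b + 2 * real N) gchoose N"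
    using gbinomial_Vandermonde[of "b + real N" "a + real N" N] by (simp add: add_ac)
  finally show ?thesis .
qed

lemma bessel_product_coeff_turan_less:
  assumes s: "s > -1"
  shows "bessel_product_coeff s (s + 2) N < bessel_product_coeff (s + 1) (s + 1) N"
proof -
  define K where "K = (2 * s + 2 + 2 * real N) gchoose N"
  define G where "G = Gamma (s + real N + 1)"
  define c where "c = s + real N + 1"
  have c_pos: "c > 0" and G_pos: "G > 0"
    using s by (simp_all add: c_def G_def)
  have "K = Gamma (2 * s + 2 + 2 * real N + 1) / (fact N * Gamma (2 * s + 2 + 2 * real N - real N + 1))"
    unfolding K_def by (rule gbinomial_Gamma) (rule pos_not_nonpos_Ints, use s in auto)
  then have K_pos: "K > 0"
    using s by (auto intro!: divide_pos_pos)
  have Gamma_1: "Gamma (s + 1 + real N + 1) = c * G"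
    using Gamma_plus1[OF pos_not_nonpos_Ints[OF c_pos]] by (simp add: c_def G_def add_ac)
  have Gamma_2: "Gamma (s + 2 + real N + 1) = (c + 1) * (c * G)"
    using Gamma_plus1[OF pos_not_nonpos_Ints[of "c + 1"]] c_pos Gamma_1 by (simp add: c_def add_ac)
  have "bessel_product_coeff (s + 1) (s + 1) N = K / ((c * G) * (c * G))"
    using bessel_product_coeff_eq[of "s + 1" "s + 1" N] s
    unfolding Gamma_1 K_def by (simp add: add_ac)
  moreover have "bessel_product_coeff s (s + 2) N = K / (G * ((c + 1) * (c * G)))"
    using bessel_product_coeff_eq[of s "s + 2" N] s
    unfolding Gamma_2 K_def G_def by (simp add: add_ac)
  moreover have "(c * G) * (c * G) < G * ((c + 1) * (c * G))"
    using c_pos G_pos by (simp add: algebra_simps)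
  ultimately show ?thesis
    using K_pos c_pos G_pos by (simp add: divide_strict_left_mono)
qed

lemma bessel_sum_turan:
  assumes s: "s > -1" and w: "w > 0"
  shows "bessel_sum s w * bessel_sum (s + 2) w < (bessel_sum (s + 1) w)\<^sup>2"
proof -
  define c where "c N = w ^ N * bessel_product_coeff (s + 1) (s + 1) N - w ^ N * bessel_product_coeff s (s + 2) N" for N
  have c_sums: "c sums ((bessel_sum (s + 1) w)\<^sup>2 - bessel_sum s w * bessel_sum (s + 2) w)"
    unfolding c_def power2_eq_square using s w by (intro sums_diff bessel_sum_product_sums) auto
  have "0 < c N" for N
    using mult_strict_left_mono[OF bessel_product_coeff_turan_less[OF s, of N], of "w ^ N"] w
    by (simp add: c_def)
  then have "0 < suminf c"
    by (intro suminf_pos sums_summable[OF c_sums])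
  then show ?thesis
    using sums_unique[OF c_sums] by simp
qed

section \<open>Poisson mixtures of gamma densities\<close>

definition poisson_weight :: "real \<Rightarrow> nat \<Rightarrow> real" where
  "poisson_weight x m = exp (- x) * x ^ m / fact m"

definition gamma_density :: "real \<Rightarrow> real \<Rightarrow> real" where
  "gamma_density a t = exp (- t) * t powr a / Gamma (a + 1)"

lemma poisson_weight_pos: "x > 0 \<Longrightarrow> poisson_weight x m > 0"
  unfolding poisson_weight_def by simp

lemma gamma_density_nonneg: "a > -1 \<Longrightarrow> gamma_density a t \<ge> 0"
  unfolding gamma_density_def by (auto intro!: divide_nonneg_pos)

lemma gamma_density_zero [simp]: "gamma_density a 0 = 0"
  unfolding gamma_density_def by simp

lemma bessel_term_eq_poisson_gamma:
  assumes t: "t \<ge> 0"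
  shows "exp (- x - t) * t powr s * bessel_term s (x * t) m = poisson_weight x m * gamma_density (real m + s) t"
proof (cases "t = 0")
  case False
  with t have "t powr (real m + s) = t ^ m * t powr s"
    by (simp add: powr_add powr_realpow)
  then show ?thesis
    unfolding bessel_term_def poisson_weight_def gamma_density_def
    by (simp add: exp_diff exp_minus power_mult_distrib field_simps)
qed simp

lemma sums_poisson_gamma:
  assumes x: "x > 0" and t: "t \<ge> 0" and s: "s > -1"
  shows "(\<lambda>m. poisson_weight x m * gamma_density (real m + s) t)
    sums (exp (- x - t) * t powr s * bessel_sum s (x * t))"
  unfolding bessel_term_eq_poisson_gamma[OF t, symmetric] bessel_sum_def
  by (rule sums_mult[OF summable_sums[OF summable_bessel_term]]) (use x t s in auto)

lemma marcumF_eq_bessel_sum: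
  assumes x: "x > 0" and y: "y > 0" and s: "s > -1"
  shows "marcumF s x y = exp (- x - y) * y powr s * bessel_sum s (x * y)"
proof -
  have "(y / x) powr (s / 2) * sqrt (x * y) powr s = y powr s"
    using x y by (simp add: powr_def ln_div ln_sqrt ln_mult exp_add[symmetric] field_simps)
  then show ?thesis
    unfolding marcumF_def besselI_eq_bessel_sum[OF mult_pos_pos[OF x y] s]
    by (metis (no_types, lifting) mult.assoc mult.commute)
qed

lemma marcumF_sums_poisson_gamma:
  assumes x: "x > 0" and y: "y > 0" and s: "s > -1"
  shows "(\<lambda>m. poisson_weight x m * gamma_density (real m + s) y) sums marcumF s x y"
  unfolding marcumF_eq_bessel_sum[OF x y s] using x y s by (intro sums_poisson_gamma) auto

lemma marcumP_integrand_sums_poisson_gamma: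
  assumes x: "x > 0" and t: "t \<ge> 0" and mu: "\<mu> > 0"
  shows "(\<lambda>m. poisson_weight x m * gamma_density (real m + \<mu> - 1) t) sums
    (x powr ((1 - \<mu>) / 2) * (t powr ((\<mu> - 1) / 2) * exp (- t - x) * besselI (\<mu> - 1) (2 * sqrt (x * t))))"
proof (cases "t = 0")
  case True
  then show ?thesis
    by simp
next
  case False
  with t have t: "t > 0"
    by simp
  have s: "\<mu> - 1 > -1"
    using mu by simp
  have "x powr ((1 - \<mu>) / 2) * t powr ((\<mu> - 1) / 2) * sqrt (x * t) powr (\<mu> - 1) = t powr (\<mu> - 1)"
    using x t by (simp add: powr_def ln_sqrt ln_mult exp_add[symmetric] field_simps)
  then have "x powr ((1 - \<mu>) / 2) * (t powr ((\<mu> - 1) / 2) * exp (- t - x) * besselI (\<mu> - 1) (2 * sqrt (x * t)))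
      = exp (- x - t) * t powr (\<mu> - 1) * bessel_sum (\<mu> - 1) (x * t)"
    unfolding besselI_eq_bessel_sum[OF mult_pos_pos[OF x t] s]
    by (simp add: exp_diff exp_minus field_simps)
  then show ?thesis
    using sums_poisson_gamma[OF x less_imp_le[OF t] s] by (simp add: add_diff_eq)
qed

lemma continuous_on_gamma_density:
  assumes a: "a > 0"
  shows "continuous_on {0..y} (gamma_density a)"
proof -
  have "continuous_on {0..y} (\<lambda>t::real. t powr a)"
    by (rule continuous_on_powr') (use a in \<open>auto intro: continuous_intros\<close>)
  moreover have "Gamma (a + 1) > 0"
    using a by simp
  ultimately show ?thesis
    unfolding gamma_density_def by (auto intro!: continuous_intros)
qed

lemma has_real_derivative_gamma_density:
  assumes a: "a > 0" and t: "t > 0"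
  shows "(gamma_density a has_real_derivative (gamma_density (a - 1) t - gamma_density a t)) (at t)"
proof -
  have Gamma_Suc: "Gamma (a + 1) = a * Gamma a"
    by (rule Gamma_plus1) (rule pos_not_nonpos_Ints[OF a])
  have "((\<lambda>t. t powr a) has_real_derivative a * t powr (a - 1)) (at t)"
    by (rule has_real_derivative_powr[OF t])
  moreover have "((\<lambda>t. exp (- t)) has_real_derivative - exp (- t)) (at t)"
    by (auto intro!: derivative_eq_intros)
  ultimately have "((\<lambda>t. exp (- t) * t powr a / Gamma (a + 1)) has_real_derivative
        (- exp (- t) * t powr a + a * t powr (a - 1) * exp (- t)) / Gamma (a + 1)) (at t)"
    by (intro DERIV_cdivide DERIV_mult)
  moreover have "(- exp (- t) * t powr a + a * t powr (a - 1) * exp (- t)) / Gamma (a + 1)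
      = gamma_density (a - 1) t - gamma_density a t"
    unfolding gamma_density_def Gamma_Suc using a Gamma_real_pos[OF a] by (simp add: divide_simps)
  ultimately show ?thesis
    unfolding gamma_density_def[abs_def] by simp
qed

lemma integral_gamma_density_step:
  assumes a: "a > 0" and y: "y > 0"
  shows "gamma_density (a - 1) integrable_on {0..y}"
    and "integral {0..y} (gamma_density (a - 1)) = gamma_density a y + integral {0..y} (gamma_density a)"
proof -
  have ftc: "((\<lambda>t. gamma_density (a - 1) t - gamma_density a t) has_integral
      (gamma_density a y - gamma_density a 0)) {0..y}"
    using y continuous_on_gamma_density[OF a] has_real_derivative_gamma_density[OF a]
    by (intro fundamental_theorem_of_calculus_interior)
      (auto simp: has_real_derivative_iff_has_vector_derivative[symmetric])
  have int_a: "gamma_density a integrable_on {0..y}"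
    by (rule integrable_continuous_real[OF continuous_on_gamma_density[OF a]])
  have "(\<lambda>t. (gamma_density (a - 1) t - gamma_density a t) + gamma_density a t) integrable_on {0..y}"
    by (rule integrable_add[OF has_integral_integrable[OF ftc] int_a])
  then show int_a1: "gamma_density (a - 1) integrable_on {0..y}"
    by simp
  have "integral {0..y} (gamma_density (a - 1))
      = integral {0..y} (\<lambda>t. gamma_density (a - 1) t - gamma_density a t) + integral {0..y} (gamma_density a)"
    using integral_diff[OF int_a1 int_a] by simp
  then show "integral {0..y} (gamma_density (a - 1)) = gamma_density a y + integral {0..y} (gamma_density a)"
    using ftc by (simp add: integral_unique)
qed

lemma gamma_density_le:
  assumes a: "a \<ge> 0" and t: "0 \<le> t" "t \<le> y"
  shows "gamma_density a t \<le> y powr a / Gamma (a + 1)"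
proof -
  have "exp (- t) * t powr a \<le> 1 * y powr a"
    by (rule mult_mono) (use a t in \<open>auto intro: powr_mono2\<close>)
  then show ?thesis
    unfolding gamma_density_def using a by (simp add: divide_right_mono)
qed

lemma integral_gamma_density_le:
  assumes a: "a \<ge> 0" and y: "y > 0"
  shows "integral {0..y} (gamma_density a) \<le> y * exp y * gamma_density a y"
proof -
  have "integral {0..y} (gamma_density a) \<le> integral {0..y} (\<lambda>t. y powr a / Gamma (a + 1))"
    using integral_gamma_density_step(1)[of "a + 1" y] a y
    by (intro integral_le gamma_density_le) auto
  also have "\<dots> = y * exp y * gamma_density a y"
    using y unfolding gamma_density_def by (simp add: exp_minus field_simps)
  finally show ?thesis .
qed

text \<open>Gamma--Poisson duality: the gamma distribution function is a Poisson tail.\<close>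

lemma sums_integral_gamma_density:
  assumes a: "a > 0" and y: "y > 0"
  shows "(\<lambda>k. gamma_density (a + real k) y) sums integral {0..y} (gamma_density (a - 1))"
proof -
  define J where "J c = integral {0..y} (gamma_density (c - 1))" for c
  have J_step: "J c = gamma_density c y + J (c + 1)" if "c > 0" for c
    unfolding J_def using integral_gamma_density_step(2)[OF that y] by simp
  have J_split: "J a = (\<Sum>k<K. gamma_density (a + real k) y) + J (a + real K)" for K
  proof (induction K)
    case (Suc K)
    have "J (a + real K) = gamma_density (a + real K) y + J (a + real K + 1)"
      using a by (intro J_step) simp
    then show ?case
      using Suc by (simp add: add_ac)
  qed simp
  have J_nonneg: "J c \<ge> 0" if "c > 0" for c
    unfolding J_def using that
    by (intro integral_nonneg[OF integral_gamma_density_step(1)[OF that y]] gamma_density_nonneg) auto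
  have "summable (\<lambda>k. gamma_density (a + real k) y)"
  proof (rule summableI_nonneg_bounded)
    show "0 \<le> gamma_density (a + real k) y" for k
      using a by (intro gamma_density_nonneg) simp
    show "(\<Sum>i<K. gamma_density (a + real i) y) \<le> J a" for K
      using J_split[of K] J_nonneg[of "a + real K"] a by simp
  qed
  then have density_lim: "(\<lambda>k. y * exp y * gamma_density (a + real k) y) \<longlonglongrightarrow> 0"
    using tendsto_mult_left[OF summable_LIMSEQ_zero, of _ "y * exp y"] by simp
  have J_le: "J (a + real (Suc K)) \<le> y * exp y * gamma_density (a + real K) y" for K
    using integral_gamma_density_le[of "a + real K" y] a y by (simp add: J_def add_ac)
  have "(\<lambda>K. J (a + real (Suc K))) \<longlonglongrightarrow> 0"
  proof (rule real_tendsto_sandwich[OF _ _ tendsto_const density_lim])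
    show "\<forall>\<^sub>F K in sequentially. 0 \<le> J (a + real (Suc K))"
      using J_nonneg a by (intro always_eventually allI) simp
    show "\<forall>\<^sub>F K in sequentially. J (a + real (Suc K)) \<le> y * exp y * gamma_density (a + real K) y"
      using J_le by (intro always_eventually allI)
  qed
  then have "(\<lambda>K. J (a + real K)) \<longlonglongrightarrow> 0"
    by (rule LIMSEQ_imp_Suc)
  then have "(\<lambda>K. J a - J (a + real K)) \<longlonglongrightarrow> J a - 0"
    by (intro tendsto_intros)
  moreover have "(\<Sum>k<K. gamma_density (a + real k) y) = J a - J (a + real K)" for K
    using J_split[of K] by linarith
  ultimately show ?thesis
    unfolding sums_def J_def by simp
qed

section \<open>Interchanging sums and integrals\<close>

lemma sums_swap_nonneg:
  fixes f :: "nat \<Rightarrow> nat \<Rightarrow> real"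
  assumes nonneg: "\<And>k m. f k m \<ge> 0"
    and rows: "\<And>k. (\<lambda>m. f k m) sums a k"
    and total: "a sums S"
  shows "(\<lambda>m. \<Sum>k. f k m) sums S"
proof -
  have a_nonneg: "a k \<ge> 0" for k
    by (rule sums_le[OF _ sums_zero rows[of k]]) (rule nonneg)
  have rows': "((\<lambda>m. (\<lambda>(k, m). f k m) (k, m)) has_sum a k) UNIV" for k
    using sums_nonneg_imp_has_sum[OF rows[of k] nonneg] by simp
  have total': "(a has_sum S) UNIV"
    by (rule sums_nonneg_imp_has_sum[OF total a_nonneg])
  have "(\<lambda>(k, m). f k m) summable_on UNIV \<times> UNIV"
    using rows' total' nonneg by (intro summable_on_SigmaI[where g = a]) (auto intro: has_sum_imp_summable)
  then have "((\<lambda>(k, m). f k m) has_sum S) (UNIV \<times> UNIV)"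
    using rows' total' by (intro has_sum_SigmaI[where g = a]) auto
  then have swapped: "((\<lambda>(m, k). f k m) has_sum S) (UNIV \<times> UNIV)"
    using has_sum_swap[THEN iffD1] by fastforce
  have "((\<lambda>k. f k m) has_sum (\<Sum>k. f k m)) UNIV" for m
  proof -
    have "(\<lambda>k. f k m) summable_on UNIV"
      using summable_on_SigmaD1[of "\<lambda>m k. f k m" UNIV "\<lambda>_. UNIV" m] swapped has_sum_imp_summable by auto
    then have "((\<lambda>k. f k m) has_sum infsum (\<lambda>k. f k m) UNIV) UNIV"
      by (rule has_sum_infsum)
    moreover from this have "(\<lambda>k. f k m) sums infsum (\<lambda>k. f k m) UNIV"
      by (rule has_sum_imp_sums)
    ultimately show ?thesis
      by (simp add: sums_unique[symmetric])
  qed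
  then have "((\<lambda>m. \<Sum>k. f k m) has_sum S) UNIV"
    by (intro has_sum_SigmaD[OF swapped]) auto
  then show ?thesis
    by (rule has_sum_imp_sums)
qed

lemma has_integral_suminf_nonneg:
  fixes h :: "nat \<Rightarrow> 'a::euclidean_space \<Rightarrow> real"
  assumes integrable: "\<And>m. h m integrable_on S"
    and nonneg: "\<And>m t. t \<in> S \<Longrightarrow> h m t \<ge> 0"
    and sums: "\<And>t. t \<in> S \<Longrightarrow> (\<lambda>m. h m t) sums g t"
    and integrals_sums: "(\<lambda>m. integral S (h m)) sums I"
  shows "(g has_integral I) S"
proof -
  define f where "f K t = (\<Sum>m<K. h m t)" for K t
  have integral_f: "integral S (f K) = (\<Sum>m<K. integral S (h m))" for K
    unfolding f_def using integrable by (intro integral_sum) auto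
  have integral_nonneg: "integral S (h m) \<ge> 0" for m
    using integrable nonneg by (intro integral_nonneg) auto
  have "g integrable_on S \<and> (\<lambda>K. integral S (f K)) \<longlonglongrightarrow> integral S g"
  proof (rule monotone_convergence_increasing)
    show "f K integrable_on S" for K
      unfolding f_def using integrable by (intro integrable_sum) auto
    show "f K t \<le> f (Suc K) t" if "t \<in> S" for K t
      using nonneg[OF that] by (simp add: f_def)
    show "(\<lambda>K. f K t) \<longlonglongrightarrow> g t" if "t \<in> S" for t
      using sums[OF that] by (simp add: f_def sums_def)
    have "\<bar>\<Sum>m<K. integral S (h m)\<bar> \<le> I" for K
      using integral_nonneg sum_le_suminf[OF sums_summable[OF integrals_sums]]
      by (simp add: sum_nonneg sums_unique[OF integrals_sums, symmetric])
    then show "bounded (range (\<lambda>K. integral S (f K)))"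
      unfolding bounded_iff integral_f by auto
  qed
  moreover have "(\<lambda>K. integral S (f K)) \<longlonglongrightarrow> I"
    using integrals_sums by (simp add: integral_f sums_def)
  ultimately show ?thesis
    using LIMSEQ_unique by (metis has_integral_integral)
qed

section \<open>The series expansion of \<open>P\<^sub>\<mu>\<close>\<close>

lemma marcumF_pos:
  assumes x: "x > 0" and y: "y > 0" and s: "s > -1"
  shows "marcumF s x y > 0"
  unfolding marcumF_eq_bessel_sum[OF x y s] using bessel_sum_pos[OF s mult_pos_pos[OF x y]] y by simp

lemma marcumF_le_exp_series:
  assumes x: "x > 0" and y: "y > 0" and mu: "\<mu> > 0"
  shows "marcumF (\<mu> + real k) x y \<le> marcumF \<mu> x y * (inverse (fact k) * y ^ k)"
proof -
  have w: "x * y > 0"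
    using x y by simp
  have "bessel_term (\<mu> + real k) (x * y) m \<le> bessel_term \<mu> (x * y) m / fact k" for m
  proof -
    have "Gamma (real m + \<mu> + 1) * fact k \<le> Gamma (real m + \<mu> + 1 + real k)"
      by (rule Gamma_times_fact_le) (use mu in simp)
    moreover have "Gamma (real m + \<mu> + 1) > 0" "Gamma (real m + \<mu> + 1 + real k) > 0"
      using mu by simp_all
    ultimately have "(x * y) ^ m / (fact m * Gamma (real m + \<mu> + 1 + real k))
        \<le> (x * y) ^ m / (fact m * (Gamma (real m + \<mu> + 1) * fact k))"
      using w by (intro divide_left_mono) (auto intro!: mult_left_mono mult_pos_pos)
    then show ?thesis
      unfolding bessel_term_def by (simp add: field_simps)
  qed
  then have "bessel_sum (\<mu> + real k) (x * y) \<le> bessel_sum \<mu> (x * y) / fact k"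
    unfolding bessel_sum_def
    using suminf_le[OF _ summable_bessel_term summable_divide[OF summable_bessel_term]] mu w
    by (simp add: suminf_divide[OF summable_bessel_term, symmetric])
  then have "exp (- x - y) * (y powr \<mu> * y ^ k) * bessel_sum (\<mu> + real k) (x * y)
      \<le> exp (- x - y) * (y powr \<mu> * y ^ k) * (bessel_sum \<mu> (x * y) / fact k)"
    using y by (intro mult_left_mono) auto
  then show ?thesis
    using x y mu by (simp add: marcumF_eq_bessel_sum powr_add powr_realpow field_simps)
qed

lemma summable_marcumF:
  assumes x: "x > 0" and y: "y > 0" and mu: "\<mu> > 0"
  shows "summable (\<lambda>k. marcumF (\<mu> + real k) x y)"
proof (rule summable_comparison_test'[where N = 0])
  show "summable (\<lambda>k. marcumF \<mu> x y * (inverse (fact k) * y ^ k))"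
    by (intro summable_mult summable_exp)
  show "norm (marcumF (\<mu> + real k) x y) \<le> marcumF \<mu> x y * (inverse (fact k) * y ^ k)" for k
    using marcumF_le_exp_series[OF x y mu, of k] marcumF_pos[OF x y, of "\<mu> + real k"] mu by simp
qed

lemma marcumF_sums_marcumP:
  assumes x: "x > 0" and y: "y > 0" and mu: "\<mu> > 0"
  shows "(\<lambda>k. marcumF (\<mu> + real k) x y) sums marcumP \<mu> x y"
proof -
  define S where "S = (\<Sum>k. marcumF (\<mu> + real k) x y)"
  have F_sums: "(\<lambda>k. marcumF (\<mu> + real k) x y) sums S"
    unfolding S_def by (rule summable_sums[OF summable_marcumF[OF x y mu]])
  define h where "h m t = poisson_weight x m * gamma_density (real m + \<mu> - 1) t" for m t
  have h_integrable: "h m integrable_on {0..y}" for m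
    using integral_gamma_density_step(1)[of "real m + \<mu>" y] mu y
    unfolding h_def by (intro integrable_on_mult_right) (simp add: diff_add_eq)
  have integral_h: "integral {0..y} (h m) = poisson_weight x m * (\<Sum>k. gamma_density (real m + \<mu> + real k) y)" for m
    using sums_integral_gamma_density[of "real m + \<mu>" y] mu y
    unfolding h_def by (simp add: sums_unique[symmetric] diff_add_eq)
  have "(\<lambda>m. \<Sum>k. poisson_weight x m * gamma_density (real m + \<mu> + real k) y) sums S"
  proof (rule sums_swap_nonneg[OF _ _ F_sums])
    show "0 \<le> poisson_weight x m * gamma_density (real m + \<mu> + real k) y" for k m
      using x mu by (intro mult_nonneg_nonneg gamma_density_nonneg less_imp_le[OF poisson_weight_pos]) auto
    show "(\<lambda>m. poisson_weight x m * gamma_density (real m + \<mu> + real k) y) sums marcumF (\<mu> + real k) x y" for k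
      using marcumF_sums_poisson_gamma[OF x y, of "\<mu> + real k"] mu by (simp add: add.assoc)
  qed
  moreover have "(\<Sum>k. poisson_weight x m * gamma_density (real m + \<mu> + real k) y)
      = integral {0..y} (h m)" for m
    unfolding integral_h using sums_integral_gamma_density[of "real m + \<mu>" y] mu y
    by (intro suminf_mult sums_summable) auto
  ultimately have "(\<lambda>m. integral {0..y} (h m)) sums S"
    by simp
  then have "((\<lambda>t. x powr ((1 - \<mu>) / 2) * (t powr ((\<mu> - 1) / 2) * exp (- t - x)
      * besselI (\<mu> - 1) (2 * sqrt (x * t)))) has_integral S) {0..y}"
    using h_integrable x mu marcumP_integrand_sums_poisson_gamma
    by (intro has_integral_suminf_nonneg[where h = h])
      (auto simp: h_def intro!: mult_nonneg_nonneg gamma_density_nonneg less_imp_le[OF poisson_weight_pos])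
  then have "marcumP \<mu> x y = S"
    unfolding marcumP_def by (simp only: integral_mult_right[symmetric] integral_unique)
  then show ?thesis
    using F_sums by simp
qed

lemma marcumF_turan:
  assumes x: "x > 0" and y: "y > 0" and s: "s > -1"
  shows "marcumF s x y * marcumF (s + 2) x y < (marcumF (s + 1) x y)\<^sup>2"
proof -
  define c where "c = exp (- x - y) * y powr (s + 1)"
  have c_pos: "c\<^sup>2 > 0"
    using y by (simp add: c_def)
  have "y powr s * y powr (s + 2) = y powr (s + 1) * y powr (s + 1)"
    by (simp add: powr_add[symmetric])
  then have "marcumF s x y * marcumF (s + 2) x y = c\<^sup>2 * (bessel_sum s (x * y) * bessel_sum (s + 2) (x * y))"
    using s by (simp add: marcumF_eq_bessel_sum[OF x y] c_def power2_eq_square algebra_simps)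
  also have "\<dots> < c\<^sup>2 * (bessel_sum (s + 1) (x * y))\<^sup>2"
    using x y by (intro mult_strict_left_mono[OF bessel_sum_turan[OF s] c_pos]) simp
  also have "\<dots> = (marcumF (s + 1) x y)\<^sup>2"
    using s by (simp add: marcumF_eq_bessel_sum[OF x y] c_def power_mult_distrib)
  finally show ?thesis .
qed

theorem proposition4:
  fixes \<mu> x y :: real and n q :: nat
  assumes "\<mu> > 0" and "x > 0" and "y > 0"
  shows "(\<Sum>k\<le>n. marcumF (\<mu> + real k) x y) < marcumP \<mu> x y \<and>
    (marcumF (\<mu> + real n + 1) x y > marcumF (\<mu> + real n + real q + 2) x y \<longrightarrow>
      marcumP \<mu> x y < (\<Sum>k\<le>n. marcumF (\<mu> + real k) x y) + marcumU (\<mu> + real n + 1) q x y)"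
proof -
  note mu = assms(1) and x = assms(2) and y = assms(3)
  define F where "F k = marcumF (\<mu> + real k) x y" for k
  have F_sums: "F sums marcumP \<mu> x y"
    unfolding F_def by (rule marcumF_sums_marcumP[OF x y mu])
  have F_pos: "F k > 0" for k
    unfolding F_def using mu by (intro marcumF_pos[OF x y]) auto
  have F_turan: "F k * F (k + 2) < (F (k + 1))\<^sup>2" for k
    using marcumF_turan[OF x y, of "\<mu> + real k"] mu by (simp add: F_def add_ac)
  note bounds = log_concave_suminf_bounds[OF sums_summable[OF F_sums] F_pos F_turan]
  have "marcumU (\<mu> + real n + 1) q x y
      = (\<Sum>k\<le>q. F (n + 1 + k)) / (F (n + 1) - F (n + q + 2)) * F (n + 1)"
    unfolding marcumU_def F_def by (simp add: add_ac)
  then show ?thesis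
    using bounds(1)[of n] bounds(2)[of n q] sums_unique[OF F_sums] unfolding F_def by (simp add: add_ac)
qed

end
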